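(* Let $\Lambda$ be a finite graph with $N$ sites, $\mathcal{H}=\bigotimes_{x\in\Lambda}\mathfrak{h}_x$ with each $\mathfrak{h}_x$ a copy of a finite-dimensional Hilbert space $\mathfrak{h}$, $\mathfrak{h}^s\subset\mathfrak{h}$ a subspace, and $\mathrm{Sym}^N(\mathfrak{h}^s)\subset\mathcal{H}$ the totally symmetric subspace of $\bigotimes_x\mathfrak{h}^s_x$. Let $X\subset\Lambda$ be a connected subset of sites. If an operator $\hat{O}_X$ on $\mathcal{H}$ acts non-trivially only on the sites of $X$ and annihilates $\mathrm{Sym}^N(\mathfrak{h}^s)$, then $$\hat{O}_X=\sum_{x\in X}\hat{o}^{(1)}_{[x]}\hat{P}_x+\sum_{\langle x,y\rangle\subset X}\hat{o}^{(2)}_{[xy]}\hat{P}_{xy},$$ where the second sum runs over nearest-neighbour pairs with both sites in $X$, each $\hat{P}_x$ (resp. $\hat{P}_{xy}$) is a projector acting non-trivially only on site $x$ (resp. sites $x,y$) and annihilating $\mathrm{Sym}^N(\mathfrak{h}^s)$, and the operators $\hat{o}^{(1)}_{[x]},\hat{o}^{(2)}_{[xy]}$ act non-trivially only within $X$.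
   Context: For $\sigma\in\mathfrak{S}_N$, $\hat{\sigma}$ permutes tensor factors of $\mathcal{H}$. $\mathrm{Sym}^N(\mathfrak{h}^s)=\{v\in\bigotimes_x\mathfrak{h}^s_x:\hat{\sigma}v=v\ \forall\sigma\}$. An operator annihilates a subspace if it maps all its vectors to $0$. *)

theory Defs
  imports Complex_Main "HOL-Library.FuncSet"
begin

text \<open>Sites: a finite type 'a with edge relation E. One-site Hilbert space h = ('b => complex)
  for a finite basis type 'b (standard inner product). The global space
  H = tensor over sites of h is identified with functions on configurations ('a => 'b).
  Operators on H are given by their matrix kernels.\<close>

type_synonym ('a, 'b) hvec = "('a \<Rightarrow> 'b) \<Rightarrow> complex"
type_synonym ('a, 'b) hop = "('a \<Rightarrow> 'b) \<Rightarrow> ('a \<Rightarrow> 'b) \<Rightarrow> complex"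

definition op_apply :: "('a::finite, 'b::finite) hop \<Rightarrow> ('a, 'b) hvec \<Rightarrow> ('a, 'b) hvec" where
  "op_apply A v = (\<lambda>c. \<Sum>c'\<in>UNIV. A c c' * v c')"

definition op_mult :: "('a::finite, 'b::finite) hop \<Rightarrow> ('a, 'b) hop \<Rightarrow> ('a, 'b) hop" where
  "op_mult A B = (\<lambda>c c'. \<Sum>d\<in>UNIV. A c d * B d c')"

definition projector :: "('a::finite, 'b::finite) hop \<Rightarrow> bool" where
  "projector P \<longleftrightarrow> op_mult P P = P \<and> (\<forall>c c'. P c c' = cnj (P c' c))"

text \<open>A acts non-trivially only on the sites in Y: A = A_Y tensor identity on the complement.\<close>
definition acts_within :: "'a set \<Rightarrow> ('a::finite, 'b::finite) hop \<Rightarrow> bool" where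
  "acts_within Y A \<longleftrightarrow> (\<exists>B :: ('a \<Rightarrow> 'b) \<Rightarrow> ('a \<Rightarrow> 'b) \<Rightarrow> complex.
     \<forall>c c'. A c c' = (if (\<forall>x. x \<notin> Y \<longrightarrow> c x = c' x) then B (restrict c Y) (restrict c' Y) else 0))"

definition is_subspace :: "('b \<Rightarrow> complex) set \<Rightarrow> bool" where
  "is_subspace S \<longleftrightarrow> (\<lambda>_. 0) \<in> S \<and> (\<forall>u\<in>S. \<forall>w\<in>S. (\<lambda>i. u i + w i) \<in> S)
     \<and> (\<forall>a. \<forall>u\<in>S. (\<lambda>i. a * u i) \<in> S)"

definition tensor_power :: "('b \<Rightarrow> complex) set \<Rightarrow> ('a::finite, 'b) hvec set" where
  "tensor_power S = {v. \<exists>(n::nat) (a::nat \<Rightarrow> complex) (\<phi>::nat \<Rightarrow> 'a \<Rightarrow> 'b \<Rightarrow> complex).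
      (\<forall>i<n. \<forall>x. \<phi> i x \<in> S) \<and> v = (\<lambda>c. \<Sum>i<n. a i * (\<Prod>x\<in>UNIV. \<phi> i x (c x)))}"

definition perm_vec :: "('a \<Rightarrow> 'a) \<Rightarrow> ('a, 'b) hvec \<Rightarrow> ('a, 'b) hvec" where
  "perm_vec \<sigma> v = (\<lambda>c. v (c \<circ> \<sigma>))"

definition Sym :: "('b \<Rightarrow> complex) set \<Rightarrow> ('a::finite, 'b) hvec set" where
  "Sym S = {v \<in> tensor_power S. \<forall>\<sigma>. bij \<sigma> \<longrightarrow> perm_vec \<sigma> v = v}"

definition connected_in :: "('a \<Rightarrow> 'a \<Rightarrow> bool) \<Rightarrow> 'a set \<Rightarrow> bool" where
  "connected_in E X \<longleftrightarrow> X \<noteq> {} \<and>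
     (\<forall>x\<in>X. \<forall>y\<in>X. (\<lambda>u v. u \<in> X \<and> v \<in> X \<and> E u v)\<^sup>*\<^sup>* x y)"

definition edges_in :: "('a \<Rightarrow> 'a \<Rightarrow> bool) \<Rightarrow> 'a set \<Rightarrow> 'a set set" where
  "edges_in E X = {{x, y} | x y. x \<in> X \<and> y \<in> X \<and> E x y}"

end

theory Submission
  imports Defs "HOL-Analysis.Analysis" "HOL-Library.Function_Algebras"
begin

text \<open>Let \<open>P\<close> be the orthogonal projector of the one-site space onto \<open>S\<close>, and let \<open>Q\<close> be the sum,
  over all permutations \<open>\<sigma>\<close> of \<open>X\<close>, of \<open>\<sigma>\<close> composed with \<open>P\<close> at every site of \<open>X\<close>. By Ryser's
  formula for the permanent, each column of \<open>Q\<close> is a linear combination of vectors that are a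
  product of one fixed vector of \<open>S\<close> over the sites of \<open>X\<close>, times a basis vector outside \<open>X\<close>. Since
  \<open>Op\<close> acts only on \<open>X\<close> and annihilates the symmetric product vectors over all sites, it annihilates
  these, so \<open>Op Q = 0\<close> and \<open>|X|! Op\<close> is the sum of the \<open>Op (1 - \<sigma> P\<^sub>X)\<close>. Each
  \<open>1 - \<sigma> P\<^sub>X = (1 - \<sigma>) + \<sigma> (1 - P\<^sub>X)\<close> lies in the left ideal generated, with coefficients acting
  within \<open>X\<close>, by the site projectors \<open>1 - P\<^sub>x\<close> and the edge antisymmetrizers \<open>(1 - \<tau>\<^sub>x\<^sub>y) / 2\<close>:
  telescope \<open>1 - P\<^sub>X\<close> over the sites of \<open>X\<close>, and write \<open>\<sigma>\<close> as a product of nearest-neighbour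
  transpositions, which is possible because \<open>X\<close> is connected.\<close>

section \<open>Orthogonal projection onto a one-site subspace\<close>

lemma is_subspace_add: "is_subspace S \<Longrightarrow> u \<in> S \<Longrightarrow> w \<in> S \<Longrightarrow> (\<lambda>i. u i + w i) \<in> S"
  unfolding is_subspace_def by blast

lemma is_subspace_scale: "is_subspace S \<Longrightarrow> u \<in> S \<Longrightarrow> (\<lambda>i. a * u i) \<in> S"
  unfolding is_subspace_def by blast

lemma is_subspace_diff:
  assumes "is_subspace S" "u \<in> S" "w \<in> S"
  shows "(\<lambda>i. u i - w i) \<in> S"
  using is_subspace_add[OF assms(1,2) is_subspace_scale[OF assms(1,3), of "-1"]] by simp

lemma is_subspace_sum:
  assumes "is_subspace S" "finite A" "\<And>i. i \<in> A \<Longrightarrow> f i \<in> S"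
  shows "(\<lambda>b. \<Sum>i\<in>A. f i b) \<in> S"
  using assms(2,3)
proof (induction A rule: finite_induct)
  case empty
  then show ?case using assms(1) unfolding is_subspace_def by simp
next
  case (insert a A)
  then show ?case using is_subspace_add[OF assms(1), of "f a"] by simp
qed

definition cinner :: "('b::finite \<Rightarrow> complex) \<Rightarrow> ('b \<Rightarrow> complex) \<Rightarrow> complex" where
  "cinner u v = (\<Sum>b\<in>UNIV. cnj (u b) * v b)"

lemma cinner_commute: "cinner v u = cnj (cinner u v)"
  by (simp add: cinner_def mult.commute)

lemma cinner_self_eq_0_iff: "cinner u u = 0 \<longleftrightarrow> u = (\<lambda>_. 0)"
proof -
  have "cnj (u b) * u b = of_real ((cmod (u b))\<^sup>2)" for b
    by (subst complex_norm_square) (simp add: mult.commute)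
  then have "cinner u u = of_real (\<Sum>b\<in>UNIV. (cmod (u b))\<^sup>2)"
    by (simp add: cinner_def)
  then show ?thesis
    by (simp add: sum_nonneg_eq_0_iff fun_eq_iff del: of_real_sum)
qed

lemma cinner_add_left: "cinner (\<lambda>b. u b + w b) v = cinner u v + cinner w v"
  by (simp add: cinner_def algebra_simps sum.distrib)

lemma cinner_sum_left:
  "cinner (\<lambda>b. \<Sum>i\<in>A. a i * u i b) v = (\<Sum>i\<in>A. cnj (a i) * cinner (u i) v)"
  by (simp add: cinner_def sum_distrib_left sum_distrib_right mult_ac sum.swap[of _ UNIV])

lemma cinner_indicator_left: "cinner (\<lambda>b. if b = b' then 1 else 0) v = v b'"
proof -
  have "cinner (\<lambda>b. if b = b' then 1 else 0) v = (\<Sum>b\<in>UNIV. if b = b' then v b else 0)"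
    unfolding cinner_def by (rule sum.cong) auto
  then show ?thesis by simp
qed

lemma subspace_vec_lambda_image:
  fixes S :: "('b::finite \<Rightarrow> complex) set"
  assumes S: "is_subspace S"
  shows "subspace (vec_lambda ` S)"
  unfolding subspace_def
proof (intro conjI ballI allI)
  show "0 \<in> vec_lambda ` S"
    using S unfolding is_subspace_def by (intro image_eqI[of _ _ "\<lambda>_. 0"]) (auto simp: vec_eq_iff)
next
  fix u w assume "u \<in> vec_lambda ` S" "w \<in> vec_lambda ` S"
  then obtain u' w' where "u = vec_lambda u'" "w = vec_lambda w'" "u' \<in> S" "w' \<in> S" by auto
  then show "u + w \<in> vec_lambda ` S"
    by (intro image_eqI[of _ _ "\<lambda>i. u' i + w' i"]) (auto simp: vec_eq_iff intro: is_subspace_add[OF S])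
next
  fix r :: real and u assume "u \<in> vec_lambda ` S"
  then obtain u' where "u = vec_lambda u'" "u' \<in> S" by auto
  then show "r *\<^sub>R u \<in> vec_lambda ` S"
    by (intro image_eqI[of _ _ "\<lambda>i. of_real r * u' i"])
       (simp_all add: vec_eq_iff is_subspace_scale[OF S], simp add: scaleR_conv_of_real)
qed

text \<open>The inner product on \<open>'b \<Rightarrow> complex\<close> has the real inner product of \<open>complex^'b\<close> as its
  real part; orthogonality to the complex subspace \<open>S\<close> follows by also testing \<open>\<i> * w\<close>.\<close>
lemma is_subspace_orthogonal_decomposition:
  fixes S :: "('b::finite \<Rightarrow> complex) set"
  assumes S: "is_subspace S"
  obtains y z where "y \<in> S" "\<And>w. w \<in> S \<Longrightarrow> cinner z w = 0" "x = (\<lambda>b. y b + z b)"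
proof -
  define V where "V = (vec_lambda ` S :: (complex^'b) set)"
  have "subspace V"
    unfolding V_def using S by (rule subspace_vec_lambda_image)
  then have span_V: "span V = V" by (rule span_eq_iff[THEN iffD2])
  obtain y z where y: "y \<in> V" and z: "\<And>w. w \<in> V \<Longrightarrow> orthogonal z w"
    and xyz: "vec_lambda x = y + z"
    using orthogonal_subspace_decomp_exists[of V "vec_lambda x"] unfolding span_V by blast
  obtain y' where y': "y = vec_lambda y'" "y' \<in> S" using y unfolding V_def by auto
  have re0: "Re (cinner (vec_nth z) w) = 0" if "w \<in> S" for w
  proof -
    have "z \<bullet> vec_lambda w = 0" using z[of "vec_lambda w"] that by (auto simp: V_def orthogonal_def)
    then show ?thesis by (simp add: cinner_def inner_vec_def inner_complex_def)
  qed
  show ?thesis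
  proof
    show "y' \<in> S" by fact
    show "x = (\<lambda>b. y' b + vec_nth z b)"
      using arg_cong[OF xyz, of vec_nth] y' by (simp add: fun_eq_iff)
  next
    fix w assume w: "w \<in> S"
    have "cinner (vec_nth z) (\<lambda>b. \<i> * w b) = \<i> * cinner (vec_nth z) w"
      by (simp add: cinner_def sum_distrib_left algebra_simps)
    then show "cinner (vec_nth z) w = 0"
      using re0[OF w] re0[OF is_subspace_scale[OF S w, of \<i>]] by (simp add: complex_eq_iff)
  qed
qed

definition orthogonal_projector_onto ::
  "('b::finite \<Rightarrow> complex) set \<Rightarrow> ('b \<Rightarrow> 'b \<Rightarrow> complex) \<Rightarrow> bool" where
  "orthogonal_projector_onto S P \<longleftrightarrow> (\<forall>b'. (\<lambda>b. P b b') \<in> S)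
     \<and> (\<forall>v\<in>S. \<forall>b. (\<Sum>b'\<in>UNIV. P b b' * v b') = v b) \<and> (\<forall>b b'. P b b' = cnj (P b' b))"

lemma orthogonal_components_fix_subspace:
  fixes S :: "('b::finite \<Rightarrow> complex) set"
  assumes S: "is_subspace S" and Y: "\<And>b'. Y b' \<in> S" and Z: "\<And>b' w. w \<in> S \<Longrightarrow> cinner (Z b') w = 0"
    and YZ: "\<And>b b'. Y b' b + Z b' b = (if b = b' then 1 else 0)" and v: "v \<in> S"
  shows "(\<Sum>b'\<in>UNIV. Y b' b * v b') = v b"
proof -
  define Yv where "Yv = (\<lambda>b. \<Sum>b'\<in>UNIV. v b' * Y b' b)"
  define Zv where "Zv = (\<lambda>b. \<Sum>b'\<in>UNIV. v b' * Z b' b)"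
  have v_eq: "v b = Yv b + Zv b" for b
  proof -
    have "v b = (\<Sum>b'\<in>UNIV. v b' * (if b = b' then 1 else 0))"
      by (simp add: if_distrib cong: if_cong)
    also have "\<dots> = Yv b + Zv b"
      unfolding Yv_def Zv_def YZ[symmetric] by (simp add: algebra_simps sum.distrib)
    finally show ?thesis .
  qed
  have "Yv \<in> S"
    unfolding Yv_def by (rule is_subspace_sum[OF S]) (auto intro: is_subspace_scale[OF S] Y)
  moreover have "Zv = (\<lambda>b. v b - Yv b)"
    using v_eq by (simp add: fun_eq_iff)
  ultimately have "Zv \<in> S"
    using is_subspace_diff[OF S v] by simp
  then have "cinner Zv Zv = 0"
    unfolding Zv_def cinner_sum_left using Z by simp
  then have "v b = Yv b"
    using v_eq[of b] by (simp add: cinner_self_eq_0_iff)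
  then show ?thesis
    by (simp add: Yv_def mult.commute)
qed

text \<open>Column \<open>b'\<close> of the projector is the \<open>S\<close>-component of the basis vector \<open>b'\<close>.\<close>
lemma orthogonal_projector_onto_exists:
  fixes S :: "('b::finite \<Rightarrow> complex) set"
  assumes S: "is_subspace S"
  obtains P where "orthogonal_projector_onto S P"
proof -
  have "\<exists>y z. y \<in> S \<and> (\<forall>w\<in>S. cinner z w = 0) \<and> (\<forall>b. y b + z b = (if b = b' then 1 else 0))" for b'
  proof -
    obtain y z where "y \<in> S" "\<And>w. w \<in> S \<Longrightarrow> cinner z w = 0"
      "(\<lambda>b. if b = b' then 1 else 0) = (\<lambda>b. y b + z b)"
      by (rule is_subspace_orthogonal_decomposition[OF S, where x = "\<lambda>b. if b = b' then 1 else 0"]) blast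
    then show ?thesis by (intro exI[of _ y] exI[of _ z]) (simp add: fun_eq_iff)
  qed
  then obtain Y Z where Y: "\<And>b'. Y b' \<in> S" and Z: "\<And>b' w. w \<in> S \<Longrightarrow> cinner (Z b') w = 0"
    and YZ: "\<And>b b'. Y b' b + Z b' b = (if b = b' then 1 else 0)"
    by metis
  have gram: "Y b' b = cinner (Y b) (Y b')" for b b'
  proof -
    have "Y b' b = cinner (\<lambda>k. Y b k + Z b k) (Y b')"
      by (simp only: YZ cinner_indicator_left)
    then show ?thesis by (simp only: cinner_add_left Z[OF Y] add_0_right)
  qed
  have "Y b' b = cnj (Y b b')" for b b'
    unfolding gram[of b' b] gram[of b b'] by (rule cinner_commute)
  then show thesis
    using that[of "\<lambda>b b'. Y b' b"] orthogonal_components_fix_subspace[OF S Y Z YZ] Y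
    unfolding orthogonal_projector_onto_def by blast
qed

definition eq_outside :: "'a set \<Rightarrow> ('a \<Rightarrow> 'b) \<Rightarrow> ('a \<Rightarrow> 'b) \<Rightarrow> bool" where
  "eq_outside Y c d \<longleftrightarrow> (\<forall>x. x \<notin> Y \<longrightarrow> c x = d x)"

lemma eq_outside_refl [simp]: "eq_outside Y c c"
  by (simp add: eq_outside_def)

lemma eq_outside_sym: "eq_outside Y c d \<Longrightarrow> eq_outside Y d c"
  by (simp add: eq_outside_def)

lemma eq_outside_trans: "eq_outside Y c d \<Longrightarrow> eq_outside Y d e \<Longrightarrow> eq_outside Y c e"
  by (simp add: eq_outside_def)

lemma acts_within_iff:
  fixes A :: "('a::finite, 'b::finite) hop"
  shows "acts_within Y A \<longleftrightarrow> (\<forall>c c'. \<not> eq_outside Y c c' \<longrightarrow> A c c' = 0) \<and>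
    (\<forall>c c' d d'. eq_outside Y c c' \<longrightarrow> eq_outside Y d d' \<longrightarrow> (\<forall>x\<in>Y. c x = d x \<and> c' x = d' x)
       \<longrightarrow> A c c' = A d d')"
  (is "_ \<longleftrightarrow> ?vanish \<and> ?local")
proof
  assume "acts_within Y A"
  then obtain B where B: "\<And>c c'. A c c' = (if eq_outside Y c c' then B (restrict c Y) (restrict c' Y) else 0)"
    unfolding acts_within_def eq_outside_def by blast
  then show "?vanish \<and> ?local"
    by (auto simp: B intro!: arg_cong2[where f=B] restrict_ext)
next
  assume A: "?vanish \<and> ?local"
  have "A c c' = (if eq_outside Y c c' then A (restrict c Y) (restrict c' Y) else 0)" for c c'
  proof (cases "eq_outside Y c c'")
    case True
    then show ?thesis
      using A[THEN conjunct2, rule_format, of c c' "restrict c Y" "restrict c' Y"]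
      by (simp add: eq_outside_def)
  qed (simp add: A[THEN conjunct1, rule_format])
  then show "acts_within Y A"
    unfolding acts_within_def eq_outside_def by blast
qed

lemma acts_within_eq_0: "acts_within Y A \<Longrightarrow> \<not> eq_outside Y c c' \<Longrightarrow> A c c' = 0"
  unfolding acts_within_iff by blast

lemma acts_within_cong:
  "acts_within Y A \<Longrightarrow> eq_outside Y c c' \<Longrightarrow> eq_outside Y d d' \<Longrightarrow>
    (\<And>x. x \<in> Y \<Longrightarrow> c x = d x) \<Longrightarrow> (\<And>x. x \<in> Y \<Longrightarrow> c' x = d' x) \<Longrightarrow> A c c' = A d d'"
  unfolding acts_within_iff by blast

lemma acts_withinI:
  fixes A :: "('a::finite, 'b::finite) hop"
  assumes "\<And>c c'. \<not> eq_outside Y c c' \<Longrightarrow> A c c' = 0"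
    and "\<And>c c' d d'. eq_outside Y c c' \<Longrightarrow> eq_outside Y d d' \<Longrightarrow>
           \<forall>x\<in>Y. c x = d x \<and> c' x = d' x \<Longrightarrow> A c c' = A d d'"
  shows "acts_within Y A"
  unfolding acts_within_iff using assms by blast

text \<open>Overriding the sites in \<open>Y\<close> of \<open>c'\<close> by those of \<open>d\<close> maps the configurations equal to \<open>c\<close>
  outside \<open>Y\<close> bijectively onto those equal to \<open>c'\<close> outside \<open>Y\<close>.\<close>
lemma sum_eq_outside_reindex:
  fixes f g :: "('a::finite \<Rightarrow> 'b::finite) \<Rightarrow> 'c::comm_monoid_add"
  assumes f: "\<And>d. \<not> eq_outside Y d c \<Longrightarrow> f d = 0" and g: "\<And>d. \<not> eq_outside Y d c' \<Longrightarrow> g d = 0"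
    and fg: "\<And>d. eq_outside Y d c \<Longrightarrow> f d = g (override_on c' d Y)"
  shows "(\<Sum>d\<in>UNIV. f d) = (\<Sum>d\<in>UNIV. g d)"
proof -
  have "(\<Sum>d\<in>UNIV. f d) = (\<Sum>d\<in>{d. eq_outside Y d c}. f d)"
    by (rule sum.mono_neutral_right) (auto simp: f)
  also have "\<dots> = (\<Sum>d\<in>{d. eq_outside Y d c'}. g d)"
    by (rule sum.reindex_bij_witness[where i="\<lambda>d. override_on c d Y" and j="\<lambda>d. override_on c' d Y"])
       (auto simp: override_on_def eq_outside_def fun_eq_iff fg)
  also have "\<dots> = (\<Sum>d\<in>UNIV. g d)"
    by (rule sum.mono_neutral_left) (auto simp: g)
  finally show ?thesis .
qed

lemma acts_within_pointwise:
  fixes A B :: "('a::finite, 'b::finite) hop"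
  assumes "acts_within Y A" "acts_within Y B" "f 0 0 = 0"
  shows "acts_within Y (\<lambda>c c'. f (A c c') (B c c'))"
proof (rule acts_withinI)
  fix c c' d d' :: "'a \<Rightarrow> 'b"
  assume "eq_outside Y c c'" "eq_outside Y d d'" "\<forall>x\<in>Y. c x = d x \<and> c' x = d' x"
  then show "f (A c c') (B c c') = f (A d d') (B d d')"
    using acts_within_cong[OF assms(1)] acts_within_cong[OF assms(2)] by metis
qed (simp add: acts_within_eq_0[OF assms(1)] acts_within_eq_0[OF assms(2)] assms(3))

lemma acts_within_add: "acts_within Y A \<Longrightarrow> acts_within Y B \<Longrightarrow> acts_within Y (A + B)"
  using acts_within_pointwise[of Y A B "(+)"] by (simp add: plus_fun_def)

lemma acts_within_diff: "acts_within Y A \<Longrightarrow> acts_within Y B \<Longrightarrow> acts_within Y (A - B)"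
  using acts_within_pointwise[of Y A B "(-)"] by (simp add: fun_diff_def)

lemma acts_within_zero: "acts_within Y (0 :: ('a::finite, 'b::finite) hop)"
  by (rule acts_withinI) simp_all

lemma acts_within_op_mult:
  fixes A B :: "('a::finite, 'b::finite) hop"
  assumes A: "acts_within Y A" and B: "acts_within Y B"
  shows "acts_within Y (op_mult A B)"
proof (rule acts_withinI)
  fix c c' :: "'a \<Rightarrow> 'b"
  assume "\<not> eq_outside Y c c'"
  then have "A c d * B d c' = 0" for d
    using acts_within_eq_0[OF A, of c d] acts_within_eq_0[OF B, of d c'] eq_outside_trans by fastforce
  then show "op_mult A B c c' = 0"
    unfolding op_mult_def by (simp only: sum.neutral_const)
next
  fix c c' d d' :: "'a \<Rightarrow> 'b"
  assume h: "eq_outside Y c c'" "eq_outside Y d d'" "\<forall>x\<in>Y. c x = d x \<and> c' x = d' x"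
  show "op_mult A B c c' = op_mult A B d d'"
    unfolding op_mult_def
  proof (rule sum_eq_outside_reindex[where c=c and c'=d and Y=Y])
    fix e
    assume e: "eq_outside Y e c"
    have "A c e = A d (override_on d e Y)" "B e c' = B (override_on d e Y) d'"
      by (rule acts_within_cong[OF A] acts_within_cong[OF B];
          use e h in \<open>auto simp: eq_outside_def override_on_def\<close>)+
    then show "A c e * B e c' = A d (override_on d e Y) * B (override_on d e Y) d'"
      by simp
  qed (use acts_within_eq_0[OF A] eq_outside_sym in fastforce)+
qed

definition op_id :: "('a::finite, 'b::finite) hop" where
  "op_id c c' = of_bool (c = c')"

definition op_scale :: "complex \<Rightarrow> ('a::finite, 'b::finite) hop \<Rightarrow> ('a, 'b) hop" where
  "op_scale k A = (\<lambda>c c'. k * A c c')"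

definition op_perm :: "('a \<Rightarrow> 'a) \<Rightarrow> ('a::finite, 'b::finite) hop" where
  "op_perm \<sigma> c c' = of_bool (c' = c \<circ> \<sigma>)"

definition op_tensor :: "('b \<Rightarrow> 'b \<Rightarrow> complex) \<Rightarrow> 'a set \<Rightarrow> ('a::finite, 'b::finite) hop" where
  "op_tensor M A c c' = (if eq_outside A c c' then \<Prod>x\<in>A. M (c x) (c' x) else 0)"

lemma sum_fun_apply: "sum F A x = (\<Sum>i\<in>A. F i x)"
  by (induction A rule: infinite_finite_induct) auto

lemma op_apply_linear:
  "op_apply A (\<lambda>d. \<Sum>i\<in>I. a i * v i d) c = (\<Sum>i\<in>I. a i * op_apply A (v i) c)"
  by (simp add: op_apply_def sum_distrib_left mult_ac sum.swap[of _ UNIV I])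

lemma op_apply_diff: "op_apply (A - B) v c = op_apply A v c - op_apply B v c"
  by (simp add: op_apply_def algebra_simps sum_subtractf)

lemma op_apply_op_scale: "op_apply (op_scale k A) v c = k * op_apply A v c"
  by (simp add: op_apply_def op_scale_def sum_distrib_left mult.assoc)

lemma op_apply_op_id [simp]: "op_apply op_id v = v"
  by (intro ext) (simp add: op_apply_def op_id_def)

lemma op_apply_op_perm: "op_apply (op_perm \<sigma>) v = perm_vec \<sigma> v"
  by (intro ext) (simp add: op_apply_def op_perm_def perm_vec_def)

lemma op_apply_op_tensor_singleton:
  "op_apply (op_tensor M {x}) v c = (\<Sum>b\<in>UNIV. M (c x) b * v (c(x := b)))"
proof -
  have "op_apply (op_tensor M {x}) v c = (\<Sum>d\<in>range (\<lambda>b. c(x := b)). op_tensor M {x} c d * v d)"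
    unfolding op_apply_def
  proof (rule sum.mono_neutral_right)
    show "\<forall>d\<in>UNIV - range (\<lambda>b. c(x := b)). op_tensor M {x} c d * v d = 0"
    proof
      fix d assume "d \<in> UNIV - range (\<lambda>b. c(x := b))"
      moreover have "eq_outside {x} c d \<Longrightarrow> d = c(x := d x)"
        by (auto simp: eq_outside_def fun_eq_iff)
      ultimately have "\<not> eq_outside {x} c d" by blast
      then show "op_tensor M {x} c d * v d = 0" by (simp add: op_tensor_def)
    qed
  qed simp_all
  also have "\<dots> = (\<Sum>b\<in>UNIV. M (c x) b * v (c(x := b)))"
    by (subst sum.reindex) (auto simp: inj_on_def fun_eq_iff op_tensor_def eq_outside_def split: if_splits)
  finally show ?thesis .
qed

lemma op_mult_apply: "op_mult A B c c' = op_apply A (\<lambda>d. B d c') c"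
  by (simp add: op_mult_def op_apply_def)

lemma op_mult_assoc: "op_mult (op_mult A B) C = op_mult A (op_mult B C)"
proof (intro ext)
  fix c c'
  have "op_mult (op_mult A B) C c c' = (\<Sum>d\<in>UNIV. \<Sum>e\<in>UNIV. A c e * B e d * C d c')"
    by (simp add: op_mult_def sum_distrib_right)
  also have "\<dots> = (\<Sum>e\<in>UNIV. \<Sum>d\<in>UNIV. A c e * B e d * C d c')"
    by (rule sum.swap)
  also have "\<dots> = op_mult A (op_mult B C) c c'"
    by (simp add: op_mult_def sum_distrib_left mult.assoc)
  finally show "op_mult (op_mult A B) C c c' = op_mult A (op_mult B C) c c'" .
qed

lemma op_mult_add_left: "op_mult (A + B) C = op_mult A C + op_mult B C"
  by (simp add: op_mult_def fun_eq_iff algebra_simps sum.distrib)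

lemma op_mult_add_right: "op_mult A (B + C) = op_mult A B + op_mult A C"
  by (simp add: op_mult_def fun_eq_iff algebra_simps sum.distrib)

lemma op_mult_diff_left: "op_mult (A - B) C = op_mult A C - op_mult B C"
  by (simp add: op_mult_def fun_eq_iff algebra_simps sum_subtractf)

lemma op_mult_diff_right: "op_mult A (B - C) = op_mult A B - op_mult A C"
  by (simp add: op_mult_def fun_eq_iff algebra_simps sum_subtractf)

lemma op_mult_sum_left: "op_mult (sum F I) B = (\<Sum>i\<in>I. op_mult (F i) B)"
  by (intro ext) (simp add: op_mult_def sum_fun_apply sum_distrib_right sum.swap[of _ UNIV I])

lemma op_mult_sum_right: "op_mult A (sum F I) = (\<Sum>i\<in>I. op_mult A (F i))"
  by (intro ext) (simp add: op_mult_def sum_fun_apply sum_distrib_left sum.swap[of _ UNIV I])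

lemma op_mult_op_scale_left: "op_mult (op_scale k A) B = op_scale k (op_mult A B)"
  by (simp add: op_mult_def op_scale_def fun_eq_iff sum_distrib_left mult.assoc)

lemma op_mult_zero_left [simp]: "op_mult 0 B = 0"
  by (simp add: op_mult_def fun_eq_iff)

lemma op_mult_op_id_left [simp]: "op_mult op_id B = B"
  by (simp add: op_mult_apply fun_eq_iff)

lemma op_mult_op_id_right [simp]: "op_mult A op_id = A"
  by (intro ext) (simp add: op_mult_def op_id_def)

lemma op_perm_id: "op_perm id = op_id"
  by (simp add: op_perm_def op_id_def fun_eq_iff eq_commute)

lemma op_perm_comp: "op_perm (\<sigma> \<circ> \<rho>) = op_mult (op_perm \<sigma>) (op_perm \<rho>)"
  by (simp add: fun_eq_iff op_mult_apply op_apply_op_perm) (simp add: op_perm_def perm_vec_def o_assoc)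

lemma eq_outside_fun_upd [simp]: "x \<in> Y \<Longrightarrow> eq_outside Y (c(x := b)) d \<longleftrightarrow> eq_outside Y c d"
  by (auto simp: eq_outside_def)

lemma op_tensor_empty: "op_tensor M {} = op_id"
  by (simp add: op_tensor_def op_id_def eq_outside_def fun_eq_iff)

lemma op_tensor_insert:
  assumes "a \<notin> A"
  shows "op_tensor M (insert a A) = op_mult (op_tensor M {a}) (op_tensor M A)"
proof (intro ext)
  fix c c' :: "'a \<Rightarrow> 'b"
  have "M (c a) b * op_tensor M A (c(a := b)) c' = (if b = c' a then op_tensor M (insert a A) c c' else 0)"
    for b
    using assms by (auto simp: op_tensor_def eq_outside_def intro!: prod.cong)
  then have "op_mult (op_tensor M {a}) (op_tensor M A) c c' = op_tensor M (insert a A) c c'"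
    by (simp add: op_mult_apply op_apply_op_tensor_singleton)
  then show "op_tensor M (insert a A) c c' = op_mult (op_tensor M {a}) (op_tensor M A) c c'"
    by simp
qed

lemma op_mult_op_tensor_singleton:
  "op_mult (op_tensor M {x}) (op_tensor N {x}) = op_tensor (\<lambda>b b'. \<Sum>k\<in>UNIV. M b k * N k b') {x}"
proof (intro ext)
  fix c c' :: "'a \<Rightarrow> 'b"
  have "op_mult (op_tensor M {x}) (op_tensor N {x}) c c' = (\<Sum>b\<in>UNIV. M (c x) b * op_tensor N {x} (c(x := b)) c')"
    by (simp add: op_mult_apply op_apply_op_tensor_singleton)
  also have "\<dots> = op_tensor (\<lambda>b b'. \<Sum>k\<in>UNIV. M b k * N k b') {x} c c'"
    by (simp add: op_tensor_def)
  finally show "op_mult (op_tensor M {x}) (op_tensor N {x}) c c' = op_tensor (\<lambda>b b'. \<Sum>k\<in>UNIV. M b k * N k b') {x} c c'" .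
qed

lemma acts_within_op_id: "acts_within Y op_id"
proof (rule acts_withinI)
  fix c c' d d' :: "'a \<Rightarrow> 'b"
  assume "eq_outside Y c c'" "eq_outside Y d d'" "\<forall>x\<in>Y. c x = d x \<and> c' x = d' x"
  then have "c = c' \<longleftrightarrow> d = d'"
    unfolding eq_outside_def fun_eq_iff by metis
  then show "op_id c c' = op_id d d'"
    by (simp add: op_id_def)
qed (auto simp: op_id_def)

lemma acts_within_op_scale: "acts_within Y A \<Longrightarrow> acts_within Y (op_scale k A)"
  unfolding op_scale_def using acts_within_pointwise[of Y A A "\<lambda>a _. k * a"] by simp

lemma acts_within_op_tensor:
  assumes "A \<subseteq> Y"
  shows "acts_within Y (op_tensor M A)"
proof (rule acts_withinI)
  fix c c' :: "'a \<Rightarrow> 'b"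
  assume "\<not> eq_outside Y c c'"
  then show "op_tensor M A c c' = 0"
    using assms by (auto simp: op_tensor_def eq_outside_def)
next
  fix c c' d d' :: "'a \<Rightarrow> 'b"
  assume h: "eq_outside Y c c'" "eq_outside Y d d'" "\<forall>x\<in>Y. c x = d x \<and> c' x = d' x"
  then have "eq_outside A c c' \<longleftrightarrow> eq_outside A d d'"
    unfolding eq_outside_def by metis
  moreover have "(\<Prod>x\<in>A. M (c x) (c' x)) = (\<Prod>x\<in>A. M (d x) (d' x))"
    by (intro prod.cong refl) (use h(3) assms in auto)
  ultimately show "op_tensor M A c c' = op_tensor M A d d'"
    by (simp add: op_tensor_def)
qed

lemma acts_within_op_perm:
  assumes "\<sigma> permutes Y"
  shows "acts_within Y (op_perm \<sigma>)"
proof (rule acts_withinI)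
  fix c c' :: "'a \<Rightarrow> 'b"
  assume "\<not> eq_outside Y c c'"
  then show "op_perm \<sigma> c c' = 0"
    using assms by (auto simp: op_perm_def eq_outside_def permutes_not_in)
next
  fix c c' d d' :: "'a \<Rightarrow> 'b"
  assume "eq_outside Y c c'" "eq_outside Y d d'" "\<forall>x\<in>Y. c x = d x \<and> c' x = d' x"
  then have "c' = c \<circ> \<sigma> \<longleftrightarrow> d' = d \<circ> \<sigma>"
    using assms permutes_not_in[OF assms] permutes_in_image[OF assms]
    unfolding eq_outside_def fun_eq_iff o_def by metis
  then show "op_perm \<sigma> c c' = op_perm \<sigma> d d'"
    by (simp add: op_perm_def)
qed

section \<open>The local left ideal\<close>

definition local_left_ideal ::
  "'a set \<Rightarrow> ('a \<Rightarrow> ('a::finite, 'b::finite) hop) \<Rightarrow> 'a set set \<Rightarrow> ('a set \<Rightarrow> ('a, 'b) hop) \<Rightarrow> ('a, 'b) hop set"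
  where
  "local_left_ideal X P1 Ed P2 =
     {(\<Sum>x\<in>X. op_mult (T1 x) (P1 x)) + (\<Sum>e\<in>Ed. op_mult (T2 e) (P2 e)) | T1 T2.
        (\<forall>x\<in>X. acts_within X (T1 x)) \<and> (\<forall>e\<in>Ed. acts_within X (T2 e))}"

lemma zero_in_local_left_ideal: "0 \<in> local_left_ideal X P1 Ed P2"
  unfolding local_left_ideal_def
  by (rule CollectI, rule exI[of _ "\<lambda>_. 0"], rule exI[of _ "\<lambda>_. 0"]) (simp add: acts_within_zero)

lemma add_in_local_left_ideal:
  assumes "M \<in> local_left_ideal X P1 Ed P2" "N \<in> local_left_ideal X P1 Ed P2"
  shows "M + N \<in> local_left_ideal X P1 Ed P2"
proof -
  obtain S1 S2 T1 T2 where
    "\<forall>x\<in>X. acts_within X (S1 x)" "\<forall>e\<in>Ed. acts_within X (S2 e)"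
    "M = (\<Sum>x\<in>X. op_mult (S1 x) (P1 x)) + (\<Sum>e\<in>Ed. op_mult (S2 e) (P2 e))"
    "\<forall>x\<in>X. acts_within X (T1 x)" "\<forall>e\<in>Ed. acts_within X (T2 e)"
    "N = (\<Sum>x\<in>X. op_mult (T1 x) (P1 x)) + (\<Sum>e\<in>Ed. op_mult (T2 e) (P2 e))"
    using assms unfolding local_left_ideal_def by blast
  then show ?thesis
    unfolding local_left_ideal_def
    by (intro CollectI exI[of _ "\<lambda>x. S1 x + T1 x"] exI[of _ "\<lambda>e. S2 e + T2 e"])
       (simp add: acts_within_add op_mult_add_left sum.distrib algebra_simps)
qed

lemma op_mult_in_local_left_ideal:
  assumes "acts_within X L" "M \<in> local_left_ideal X P1 Ed P2"
  shows "op_mult L M \<in> local_left_ideal X P1 Ed P2"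
proof -
  obtain T1 T2 where
    "\<forall>x\<in>X. acts_within X (T1 x)" "\<forall>e\<in>Ed. acts_within X (T2 e)"
    "M = (\<Sum>x\<in>X. op_mult (T1 x) (P1 x)) + (\<Sum>e\<in>Ed. op_mult (T2 e) (P2 e))"
    using assms(2) unfolding local_left_ideal_def by blast
  then show ?thesis
    unfolding local_left_ideal_def
    by (intro CollectI exI[of _ "\<lambda>x. op_mult L (T1 x)"] exI[of _ "\<lambda>e. op_mult L (T2 e)"])
       (simp add: assms(1) acts_within_op_mult op_mult_add_right op_mult_sum_right op_mult_assoc)
qed

lemma sum_in_local_left_ideal:
  "(\<And>i. i \<in> I \<Longrightarrow> F i \<in> local_left_ideal X P1 Ed P2) \<Longrightarrow> sum F I \<in> local_left_ideal X P1 Ed P2"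
  by (induction I rule: infinite_finite_induct)
     (auto intro: zero_in_local_left_ideal add_in_local_left_ideal)

lemma op_scale_in_local_left_ideal:
  assumes "M \<in> local_left_ideal X P1 Ed P2"
  shows "op_scale k M \<in> local_left_ideal X P1 Ed P2"
  using op_mult_in_local_left_ideal[OF acts_within_op_scale[OF acts_within_op_id] assms, of k]
  by (simp add: op_mult_op_scale_left)

lemma generator_in_local_left_ideal:
  fixes P1 :: "'a \<Rightarrow> ('a::finite, 'b::finite) hop"
  shows "x \<in> X \<Longrightarrow> P1 x \<in> local_left_ideal X P1 Ed P2"
    and "e \<in> Ed \<Longrightarrow> P2 e \<in> local_left_ideal X P1 Ed P2"
proof -
  have unit: "(\<Sum>y\<in>Y. op_mult (if y = z then op_id else 0) (P y)) = P z"
    if "z \<in> Y" "finite Y" for z Y and P :: "'c \<Rightarrow> ('a, 'b) hop"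
    using that by (simp add: if_distrib[of "\<lambda>T. op_mult T _"] cong: if_cong)
  show "x \<in> X \<Longrightarrow> P1 x \<in> local_left_ideal X P1 Ed P2"
    unfolding local_left_ideal_def
    by (intro CollectI exI[of _ "\<lambda>y. if y = x then op_id else 0"] exI[of _ "\<lambda>_. 0"])
       (simp add: unit acts_within_op_id acts_within_zero)
  show "e \<in> Ed \<Longrightarrow> P2 e \<in> local_left_ideal X P1 Ed P2"
    unfolding local_left_ideal_def
    by (intro CollectI exI[of _ "\<lambda>_. 0"] exI[of _ "\<lambda>f. if f = e then op_id else 0"])
       (simp add: unit acts_within_op_id acts_within_zero)
qed

lemma id_minus_op_mult_in_local_left_ideal:
  assumes "acts_within X L"
    and "op_id - L \<in> local_left_ideal X P1 Ed P2" "op_id - M \<in> local_left_ideal X P1 Ed P2"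
  shows "op_id - op_mult L M \<in> local_left_ideal X P1 Ed P2"
proof -
  have "op_id - op_mult L M = (op_id - L) + op_mult L (op_id - M)"
    by (simp add: op_mult_diff_right)
  then show ?thesis
    by (metis assms add_in_local_left_ideal op_mult_in_local_left_ideal)
qed

definition site_projector :: "('b \<Rightarrow> 'b \<Rightarrow> complex) \<Rightarrow> 'a \<Rightarrow> ('a::finite, 'b::finite) hop" where
  "site_projector P x = op_id - op_tensor P {x}"

definition edge_transposition :: "'a set \<Rightarrow> 'a \<Rightarrow> 'a" where
  "edge_transposition e =
     (SOME \<tau>. \<exists>x y. x \<noteq> y \<and> e = {x, y} \<and> \<tau> = Transposition.transpose x y)"

definition edge_projector :: "'a set \<Rightarrow> ('a::finite, 'b::finite) hop" where
  "edge_projector e = op_scale (1/2) (op_id - op_perm (edge_transposition e))"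

lemma edge_transposition_doubleton:
  assumes "x \<noteq> y"
  shows "edge_transposition {x, y} = Transposition.transpose x y"
proof -
  have "\<exists>u v. u \<noteq> v \<and> {x, y} = {u, v} \<and> edge_transposition {x, y} = Transposition.transpose u v"
    unfolding edge_transposition_def
    by (rule someI[of _ "Transposition.transpose x y"]) (use assms in blast)
  then obtain u v where "{x, y} = {u, v}" "edge_transposition {x, y} = Transposition.transpose u v"
    by blast
  then show ?thesis
    by (metis doubleton_eq_iff transpose_commute)
qed

lemma id_minus_op_tensor_in_local_left_ideal:
  assumes "A \<subseteq> X"
  shows "op_id - op_tensor P A \<in> local_left_ideal X (site_projector P) Ed P2"
proof -
  have "finite A" by simp
  then show ?thesis
    using assms
  proof (induction A rule: finite_induct)
    case empty
    then show ?case by (simp only: op_tensor_empty diff_self zero_in_local_left_ideal)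
  next
    case (insert a A)
    have "acts_within X (op_tensor P {a})"
      using insert(4) by (simp add: acts_within_op_tensor)
    moreover have "op_id - op_tensor P {a} \<in> local_left_ideal X (site_projector P) Ed P2"
      using generator_in_local_left_ideal(1)[of a X "site_projector P"] insert(4)
      unfolding site_projector_def by simp
    moreover have "op_id - op_tensor P A \<in> local_left_ideal X (site_projector P) Ed P2"
      using insert.IH insert.prems by blast
    ultimately show ?case
      unfolding op_tensor_insert[OF insert(2)] by (rule id_minus_op_mult_in_local_left_ideal)
  qed
qed

lemma id_minus_op_perm_edge_in_local_left_ideal:
  assumes "y \<noteq> z" "{y, z} \<in> Ed"
  shows "op_id - op_perm (Transposition.transpose y z) \<in> local_left_ideal X P1 Ed edge_projector"
proof -
  have "op_id - op_perm (Transposition.transpose y z) = op_scale 2 (edge_projector {y, z})"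
    using assms(1) by (intro ext) (simp add: edge_projector_def edge_transposition_doubleton op_scale_def)
  then show ?thesis
    using op_scale_in_local_left_ideal[OF generator_in_local_left_ideal(2)[OF assms(2)]] by metis
qed

lemma id_minus_op_perm_transpose_in_local_left_ideal:
  assumes irr: "irreflp E" and a: "a \<in> X" and path: "(\<lambda>u v. u \<in> X \<and> v \<in> X \<and> E u v)\<^sup>*\<^sup>* a b"
  shows "op_id - op_perm (Transposition.transpose a b) \<in> local_left_ideal X P1 (edges_in E X) edge_projector"
  using path
proof (induction b rule: rtranclp_induct)
  case base
  then show ?case by (simp only: transpose_same op_perm_id diff_self zero_in_local_left_ideal)
next
  case (step y z)
  let ?I = "local_left_ideal X P1 (edges_in E X) edge_projector"
  have yz: "y \<in> X" "z \<in> X" "y \<noteq> z" "{y, z} \<in> edges_in E X"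
    using step(2) irr by (auto simp: irreflp_def edges_in_def)
  have perm: "Transposition.transpose u v permutes X" if "u \<in> X" "v \<in> X" for u v
    using that by (rule permutes_swap_id)
  have edge: "op_id - op_perm (Transposition.transpose y z) \<in> ?I"
    using yz(3,4) by (rule id_minus_op_perm_edge_in_local_left_ideal)
  consider "z = a" | "y = a" | "y \<noteq> a" "z \<noteq> a" by blast
  then show ?case
  proof cases
    case 1
    then show ?thesis by (simp only: transpose_same op_perm_id diff_self zero_in_local_left_ideal)
  next
    case 2
    then show ?thesis using edge by (simp only:)
  next
    case 3
    \<comment> \<open>Conjugate the transposition of \<open>a\<close> and \<open>y\<close> by the edge \<open>{y, z}\<close>.\<close>
    have "op_id - op_perm (Transposition.transpose y z \<circ> Transposition.transpose a y) \<in> ?I"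
      unfolding op_perm_comp
      by (rule id_minus_op_mult_in_local_left_ideal[OF acts_within_op_perm[OF perm[OF yz(1,2)]] edge step.IH])
    moreover have "Transposition.transpose y z \<circ> Transposition.transpose a y \<circ> Transposition.transpose y z
        = Transposition.transpose a z"
      using 3 yz(3) by (intro ext) (simp add: Transposition.transpose_def)
    ultimately show ?thesis
      using id_minus_op_mult_in_local_left_ideal[OF
          acts_within_op_perm[OF permutes_compose[OF perm[OF a yz(1)] perm[OF yz(1,2)]]] _ edge]
      by (metis op_perm_comp)
  qed
qed

lemma id_minus_op_perm_in_local_left_ideal:
  assumes irr: "irreflp E" and conn: "connected_in E X" and "\<sigma> permutes X"
  shows "op_id - op_perm \<sigma> \<in> local_left_ideal X P1 (edges_in E X) edge_projector"
proof -
  have "finite X" by simp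
  with \<open>\<sigma> permutes X\<close> show ?thesis
  proof (induction rule: permutes_induct)
    case id
    then show ?case by (simp only: op_perm_id diff_self zero_in_local_left_ideal)
  next
    case (swap a b p)
    have "op_id - op_perm (Transposition.transpose a b) \<in> local_left_ideal X P1 (edges_in E X) edge_projector"
      using id_minus_op_perm_transpose_in_local_left_ideal[OF irr swap(1)] conn swap(1,2)
      unfolding connected_in_def by blast
    then show ?case
      unfolding op_perm_comp
      by (rule id_minus_op_mult_in_local_left_ideal[OF
          acts_within_op_perm[OF permutes_swap_id[OF swap(1,2)]] _ swap.IH])
  qed
qed

section \<open>Ryser's formula for the permanent\<close>

lemma sum_surjective_PiE_eq_sum_permutes:
  assumes X: "finite X"
  shows "(\<Sum>k\<in>{k \<in> X \<rightarrow>\<^sub>E X. k ` X = X}. \<Prod>y\<in>X. g y (k y)) =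
    (\<Sum>\<sigma>\<in>{\<sigma>. \<sigma> permutes X}. \<Prod>y\<in>X. g y (\<sigma> y))"
proof (rule sum.reindex_bij_witness[where i="\<lambda>\<sigma>. restrict \<sigma> X" and j="\<lambda>k x. if x \<in> X then k x else x"])
  fix k
  assume k: "k \<in> {k \<in> X \<rightarrow>\<^sub>E X. k ` X = X}"
  then show "restrict (\<lambda>x. if x \<in> X then k x else x) X = k"
    by (auto simp: fun_eq_iff PiE_def extensional_def)
  have "inj_on k X"
    using k X by (simp add: eq_card_imp_inj_on)
  then have "bij_betw (\<lambda>x. if x \<in> X then k x else x) X X"
    using k by (auto simp: bij_betw_def inj_on_def image_def)
  then show "(\<lambda>x. if x \<in> X then k x else x) \<in> {\<sigma>. \<sigma> permutes X}"
    by (auto intro!: bij_imp_permutes)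
  show "(\<Prod>y\<in>X. g y (if y \<in> X then k y else y)) = (\<Prod>y\<in>X. g y (k y))"
    by (rule prod.cong) auto
next
  fix \<sigma>
  assume "\<sigma> \<in> {\<sigma>. \<sigma> permutes X}"
  then show "(\<lambda>x. if x \<in> X then restrict \<sigma> X x else x) = \<sigma>"
    and "restrict \<sigma> X \<in> {k \<in> X \<rightarrow>\<^sub>E X. k ` X = X}"
    by (auto simp: fun_eq_iff permutes_not_in permutes_in_image permutes_image)
qed

text \<open>Moebius inversion over the image of \<open>k : X \<rightarrow> X\<close>.\<close>
lemma sum_permutes_prod_Ryser:
  fixes g :: "'a \<Rightarrow> 'a \<Rightarrow> 'c::comm_ring_1"
  assumes X: "finite X"
  shows "(\<Sum>\<sigma>\<in>{\<sigma>. \<sigma> permutes X}. \<Prod>y\<in>X. g y (\<sigma> y)) =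
    (\<Sum>T\<in>Pow X. (-1) ^ (card X - card T) * (\<Prod>y\<in>X. \<Sum>x\<in>T. g y x))"
proof -
  define onto where "onto U = (\<Sum>k\<in>{k \<in> X \<rightarrow>\<^sub>E U. k ` X = U}. \<Prod>y\<in>X. g y (k y))" for U
  have "(\<Prod>y\<in>X. \<Sum>x\<in>U. g y x) = sum onto (Pow U)" if U: "finite U" for U
  proof -
    have "(\<Prod>y\<in>X. \<Sum>x\<in>U. g y x) = (\<Sum>k\<in>X \<rightarrow>\<^sub>E U. \<Prod>y\<in>X. g y (k y))"
      using X U by (rule prod_sum_PiE)
    also have "\<dots> = (\<Sum>V\<in>Pow U. \<Sum>k\<in>{k \<in> X \<rightarrow>\<^sub>E U. k ` X = V}. \<Prod>y\<in>X. g y (k y))"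
      by (rule sum.group[symmetric]) (use X U in \<open>auto simp: finite_PiE\<close>)
    also have "\<dots> = sum onto (Pow U)"
    proof (rule sum.cong[OF refl])
      fix V
      assume "V \<in> Pow U"
      then have "{k \<in> X \<rightarrow>\<^sub>E U. k ` X = V} = {k \<in> X \<rightarrow>\<^sub>E V. k ` X = V}"
        by (auto simp: PiE_iff)
      then show "(\<Sum>k\<in>{k \<in> X \<rightarrow>\<^sub>E U. k ` X = V}. \<Prod>y\<in>X. g y (k y)) = onto V"
        by (simp add: onto_def)
    qed
    finally show ?thesis .
  qed
  then have "onto X = (\<Sum>T\<in>Pow X. (-1) ^ (card X - card T) * (\<Prod>y\<in>X. \<Sum>x\<in>T. g y x))"
    using inclusion_exclusion_mobius[of "\<lambda>U. \<Prod>y\<in>X. \<Sum>x\<in>U. g y x" onto X] X by simp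
  then show ?thesis
    using sum_surjective_PiE_eq_sum_permutes[OF X, of g] by (simp add: onto_def)
qed

section \<open>Annihilation of the symmetrized tensor power\<close>

lemma op_apply_mult_local_factor:
  assumes A: "acts_within X A" and w: "\<And>d. eq_outside X c d \<Longrightarrow> w d = w c"
  shows "op_apply A (\<lambda>d. v d * w d) c = op_apply A v c * w c"
proof -
  have "A c d * (v d * w d) = A c d * v d * w c" for d
    using w[of d] acts_within_eq_0[OF A, of c d] by (cases "eq_outside X c d") auto
  then show ?thesis
    by (simp only: op_apply_def sum_distrib_right)
qed

lemma op_apply_cong_on_sites:
  assumes A: "acts_within X A" and v: "\<And>d d'. (\<And>x. x \<in> X \<Longrightarrow> d x = d' x) \<Longrightarrow> v d = v d'"
    and c: "\<And>x. x \<in> X \<Longrightarrow> c x = c' x"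
  shows "op_apply A v c = op_apply A v c'"
  unfolding op_apply_def
proof (rule sum_eq_outside_reindex[where Y=X and c=c and c'=c'])
  fix d
  assume d: "eq_outside X d c"
  have "A c d = A c' (override_on c' d X)"
    by (rule acts_within_cong[OF A]) (use d c in \<open>auto simp: eq_outside_def\<close>)
  moreover have "v d = v (override_on c' d X)"
    by (rule v) simp
  ultimately show "A c d * v d = A c' (override_on c' d X) * v (override_on c' d X)"
    by simp
qed (use acts_within_eq_0[OF A] eq_outside_sym in fastforce)+

lemma product_vector_in_Sym:
  fixes \<phi> :: "'b::finite \<Rightarrow> complex"
  assumes "\<phi> \<in> S"
  shows "(\<lambda>d :: 'a::finite \<Rightarrow> 'b. \<Prod>y\<in>UNIV. \<phi> (d y)) \<in> Sym S"
  unfolding Sym_def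
proof (intro CollectI conjI allI impI)
  show "(\<lambda>d. \<Prod>y\<in>UNIV. \<phi> (d y)) \<in> tensor_power S"
    unfolding tensor_power_def
    by (intro CollectI exI[of _ 1] exI[of _ "\<lambda>_. 1"] exI[of _ "\<lambda>_ _. \<phi>"]) (simp add: assms)
  fix \<sigma> :: "'a \<Rightarrow> 'a"
  assume "bij \<sigma>"
  then show "perm_vec \<sigma> (\<lambda>d. \<Prod>y\<in>UNIV. \<phi> (d y)) = (\<lambda>d. \<Prod>y\<in>UNIV. \<phi> (d y))"
    unfolding perm_vec_def o_def by (intro ext) (rule prod.reindex_bij_betw)
qed

text \<open>Tensoring with the fixed nonzero factor \<open>\<phi> b0\<close> outside \<open>X\<close> turns the local product into an
  element of \<open>Sym S\<close>; since \<open>A\<close> acts within \<open>X\<close>, the value at \<open>c\<close> only depends on \<open>c\<close> on \<open>X\<close>.\<close>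
lemma annihilates_local_product_vector:
  fixes A :: "('a::finite, 'b::finite) hop"
  assumes A: "acts_within X A" and X: "X \<noteq> {}"
    and kill: "\<forall>v\<in>Sym S. op_apply A v = (\<lambda>_. 0)" and \<phi>: "\<phi> \<in> S"
  shows "op_apply A (\<lambda>d. \<Prod>y\<in>X. \<phi> (d y)) c = 0"
proof (cases "\<phi> = (\<lambda>_. 0)")
  case True
  with X have "(\<lambda>d. \<Prod>y\<in>X. \<phi> (d y)) = (\<lambda>_. 0)"
    by (auto simp: fun_eq_iff)
  then show ?thesis
    by (simp add: op_apply_def)
next
  case False
  then obtain b0 where b0: "\<phi> b0 \<noteq> 0" by auto
  define c0 where "c0 = override_on (\<lambda>_. b0) c X"
  have "op_apply A (\<lambda>d. \<Prod>y\<in>X. \<phi> (d y)) c = op_apply A (\<lambda>d. \<Prod>y\<in>X. \<phi> (d y)) c0"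
    by (rule op_apply_cong_on_sites[OF A]) (auto simp: c0_def intro: prod.cong)
  moreover have "op_apply A (\<lambda>d. \<Prod>y\<in>X. \<phi> (d y)) c0 * (\<Prod>y\<in>-X. \<phi> (c0 y)) = 0"
  proof -
    have split: "(\<lambda>d. (\<Prod>y\<in>X. \<phi> (d y)) * (\<Prod>y\<in>-X. \<phi> (d y))) = (\<lambda>d. \<Prod>y\<in>UNIV. \<phi> (d y))"
      by (simp add: prod.subset_diff[of X UNIV] Compl_eq_Diff_UNIV mult.commute)
    have "(\<Prod>y\<in>-X. \<phi> (d y)) = (\<Prod>y\<in>-X. \<phi> (c0 y))" if "eq_outside X c0 d" for d
      using that by (auto simp: eq_outside_def intro: prod.cong)
    then have "op_apply A (\<lambda>d. \<Prod>y\<in>X. \<phi> (d y)) c0 * (\<Prod>y\<in>-X. \<phi> (c0 y)) =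
        op_apply A (\<lambda>d. (\<Prod>y\<in>X. \<phi> (d y)) * (\<Prod>y\<in>-X. \<phi> (d y))) c0"
      by (simp only: op_apply_mult_local_factor[OF A])
    also have "\<dots> = 0"
    proof -
      have "op_apply A (\<lambda>d. \<Prod>y\<in>UNIV. \<phi> (d y)) = (\<lambda>_. 0)"
        using kill product_vector_in_Sym[OF \<phi>] by blast
      then show ?thesis unfolding split by simp
    qed
    finally show ?thesis .
  qed
  moreover have "(\<Prod>y\<in>-X. \<phi> (c0 y)) \<noteq> 0"
    using b0 by (simp add: c0_def)
  ultimately show ?thesis
    by simp
qed

lemma op_mult_op_perm_op_tensor:
  assumes \<sigma>: "\<sigma> permutes X"
  shows "op_mult (op_perm \<sigma>) (op_tensor M X) d e =
    (if eq_outside X d e then \<Prod>y\<in>X. M (d y) (e (inv \<sigma> y)) else 0)"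
proof -
  have "op_mult (op_perm \<sigma>) (op_tensor M X) d e = op_tensor M X (d \<circ> \<sigma>) e"
    by (simp add: op_mult_apply op_apply_op_perm perm_vec_def)
  moreover have "eq_outside X (d \<circ> \<sigma>) e \<longleftrightarrow> eq_outside X d e"
    using \<sigma> by (auto simp: eq_outside_def permutes_not_in)
  moreover have "(\<Prod>x\<in>X. M (d (\<sigma> x)) (e x)) = (\<Prod>y\<in>X. M (d y) (e (inv \<sigma> y)))"
    using prod.permute[OF \<sigma>, of "\<lambda>y. M (d y) (e (inv \<sigma> y))"] permutes_inverses(2)[OF \<sigma>] by simp
  ultimately show ?thesis
    by (simp add: op_tensor_def)
qed

lemma symmetrized_op_tensor_eq_Ryser:
  "op_mult (\<Sum>\<sigma>\<in>{\<sigma>. \<sigma> permutes X}. op_perm \<sigma>) (op_tensor M X) d e =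
    (\<Sum>T\<in>Pow X. (-1) ^ (card X - card T) *
       ((\<Prod>y\<in>X. \<Sum>x\<in>T. M (d y) (e x)) * of_bool (eq_outside X d e)))"
proof -
  have "op_mult (\<Sum>\<sigma>\<in>{\<sigma>. \<sigma> permutes X}. op_perm \<sigma>) (op_tensor M X) d e =
      (\<Sum>\<sigma>\<in>{\<sigma>. \<sigma> permutes X}. \<Prod>y\<in>X. M (d y) (e (inv \<sigma> y))) * of_bool (eq_outside X d e)"
    by (simp add: op_mult_sum_left sum_fun_apply op_mult_op_perm_op_tensor)
  also have "(\<Sum>\<sigma>\<in>{\<sigma>. \<sigma> permutes X}. \<Prod>y\<in>X. M (d y) (e (inv \<sigma> y))) =
      (\<Sum>\<sigma>\<in>{\<sigma>. \<sigma> permutes X}. \<Prod>y\<in>X. M (d y) (e (\<sigma> y)))"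
    by (rule sum_permutations_inverse[symmetric])
  also have "\<dots> = (\<Sum>T\<in>Pow X. (-1) ^ (card X - card T) * (\<Prod>y\<in>X. \<Sum>x\<in>T. M (d y) (e x)))"
    by (rule sum_permutes_prod_Ryser) simp
  finally show ?thesis
    by (simp add: sum_distrib_right mult.assoc)
qed

lemma annihilates_symmetrized_op_tensor:
  fixes A :: "('a::finite, 'b::finite) hop"
  assumes S: "is_subspace S" and A: "acts_within X A" and X: "X \<noteq> {}"
    and kill: "\<forall>v\<in>Sym S. op_apply A v = (\<lambda>_. 0)" and M: "\<forall>b'. (\<lambda>b. M b b') \<in> S"
  shows "op_mult A (op_mult (\<Sum>\<sigma>\<in>{\<sigma>. \<sigma> permutes X}. op_perm \<sigma>) (op_tensor M X)) = 0"
proof (intro ext)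
  fix c e :: "'a \<Rightarrow> 'b"
  define \<phi> where "\<phi> T b = (\<Sum>x\<in>T. M b (e x))" for T b
  have \<phi>: "\<phi> T \<in> S" for T
    unfolding \<phi>_def by (rule is_subspace_sum[OF S]) (use M in auto)
  have local: "of_bool (eq_outside X d e) = of_bool (eq_outside X c e)" if "eq_outside X c d" for d
  proof -
    have "eq_outside X d e \<longleftrightarrow> eq_outside X c e"
      using that unfolding eq_outside_def by auto
    then show ?thesis by simp
  qed
  have "op_mult A (op_mult (\<Sum>\<sigma>\<in>{\<sigma>. \<sigma> permutes X}. op_perm \<sigma>) (op_tensor M X)) c e =
      op_apply A (\<lambda>d. \<Sum>T\<in>Pow X. (-1) ^ (card X - card T) *
        ((\<Prod>y\<in>X. \<phi> T (d y)) * of_bool (eq_outside X d e))) c"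
    by (simp only: op_mult_apply[of A] symmetrized_op_tensor_eq_Ryser \<phi>_def)
  also have "\<dots> = (\<Sum>T\<in>Pow X. (-1) ^ (card X - card T) *
      op_apply A (\<lambda>d. (\<Prod>y\<in>X. \<phi> T (d y)) * of_bool (eq_outside X d e)) c)"
    by (rule op_apply_linear)
  also have "\<dots> = (\<Sum>T\<in>Pow X. (-1) ^ (card X - card T) *
      (op_apply A (\<lambda>d. \<Prod>y\<in>X. \<phi> T (d y)) c * of_bool (eq_outside X c e)))"
    by (intro sum.cong refl arg_cong[where f="\<lambda>z. _ * z"] op_apply_mult_local_factor[OF A] local)
  also have "\<dots> = 0"
    by (simp add: annihilates_local_product_vector[OF A X kill \<phi>])
  finally show "op_mult A (op_mult (\<Sum>\<sigma>\<in>{\<sigma>. \<sigma> permutes X}. op_perm \<sigma>) (op_tensor M X)) c e = 0 c e"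
    by simp
qed

lemma projector_id_minus:
  assumes "projector P"
  shows "projector (op_id - P)"
proof -
  have PP: "op_mult P P = P" and herm: "\<And>c c'. P c c' = cnj (P c' c)"
    using assms unfolding projector_def by blast+
  have "op_mult (op_id - P) (op_id - P) = op_id - P"
    by (simp add: op_mult_diff_left op_mult_diff_right PP)
  moreover have "(op_id - P) c c' = cnj ((op_id - P) c' c)" for c c'
    using herm[of c c'] by (simp add: op_id_def eq_commute)
  ultimately show ?thesis
    unfolding projector_def by blast
qed

lemma projector_op_tensor_singleton:
  assumes "orthogonal_projector_onto S P"
  shows "projector (op_tensor P {x})"
proof -
  have col: "\<And>b'. (\<lambda>k. P k b') \<in> S" and fixes_S: "\<And>v b. v \<in> S \<Longrightarrow> (\<Sum>k\<in>UNIV. P b k * v k) = v b"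
    using assms unfolding orthogonal_projector_onto_def by blast+
  have "(\<lambda>b b'. \<Sum>k\<in>UNIV. P b k * P k b') = P"
    using fixes_S[OF col] by (intro ext) simp
  then have "op_mult (op_tensor P {x}) (op_tensor P {x}) = op_tensor P {x}"
    by (simp add: op_mult_op_tensor_singleton)
  moreover have "op_tensor P {x} c c' = cnj (op_tensor P {x} c' c)" for c c'
  proof -
    have "eq_outside {x} c c' \<longleftrightarrow> eq_outside {x} c' c"
      using eq_outside_sym by blast
    moreover have "P (c x) (c' x) = cnj (P (c' x) (c x))"
      using assms unfolding orthogonal_projector_onto_def by blast
    ultimately show ?thesis
      by (simp add: op_tensor_def)
  qed
  ultimately show ?thesis
    unfolding projector_def by blast
qed

lemma op_tensor_singleton_fixes_product_vector:
  assumes P: "orthogonal_projector_onto S P" and \<phi>: "\<phi> x \<in> S"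
  shows "op_apply (op_tensor P {x}) (\<lambda>d. \<Prod>y\<in>UNIV. \<phi> y (d y)) c = (\<Prod>y\<in>UNIV. \<phi> y (c y))"
proof -
  have split: "(\<Prod>y\<in>UNIV. \<phi> y (d y)) = \<phi> x (d x) * (\<Prod>y\<in>UNIV - {x}. \<phi> y (d y))" for d
    by (rule prod.remove) auto
  have off_x: "(\<Prod>y\<in>UNIV - {x}. \<phi> y ((c(x := b)) y)) = (\<Prod>y\<in>UNIV - {x}. \<phi> y (c y))" for b
    by (rule prod.cong) auto
  have "op_apply (op_tensor P {x}) (\<lambda>d. \<Prod>y\<in>UNIV. \<phi> y (d y)) c =
      (\<Sum>b\<in>UNIV. P (c x) b * \<phi> x b) * (\<Prod>y\<in>UNIV - {x}. \<phi> y (c y))"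
    by (simp add: op_apply_op_tensor_singleton split off_x sum_distrib_right mult.assoc)
  also have "(\<Sum>b\<in>UNIV. P (c x) b * \<phi> x b) = \<phi> x (c x)"
    using P \<phi> unfolding orthogonal_projector_onto_def by blast
  finally show ?thesis
    by (simp only: split)
qed

lemma op_apply_fixes_tensor_power:
  assumes fixes_products: "\<And>\<phi> c. (\<forall>y. \<phi> y \<in> S) \<Longrightarrow>
      op_apply A (\<lambda>d. \<Prod>y\<in>UNIV. \<phi> y (d y)) c = (\<Prod>y\<in>UNIV. \<phi> y (c y))"
    and v: "v \<in> tensor_power S"
  shows "op_apply A v = v"
proof
  fix c
  obtain n :: nat and a \<phi> where \<phi>: "\<forall>i<n. \<forall>y. \<phi> i y \<in> S"
    and v_eq: "v = (\<lambda>d. \<Sum>i<n. a i * (\<Prod>y\<in>UNIV. \<phi> i y (d y)))"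
    using v unfolding tensor_power_def by blast
  have "op_apply A v c = (\<Sum>i<n. a i * op_apply A (\<lambda>d. \<Prod>y\<in>UNIV. \<phi> i y (d y)) c)"
    unfolding v_eq by (rule op_apply_linear)
  also have "\<dots> = v c"
    unfolding v_eq using \<phi> by (simp add: fixes_products)
  finally show "op_apply A v c = v c" .
qed

lemma projector_site_projector: "orthogonal_projector_onto S P \<Longrightarrow> projector (site_projector P x)"
  unfolding site_projector_def by (intro projector_id_minus projector_op_tensor_singleton)

lemma acts_within_site_projector: "acts_within {x} (site_projector P x)"
  unfolding site_projector_def by (intro acts_within_diff acts_within_op_id acts_within_op_tensor) simp

lemma site_projector_annihilates_Sym:
  assumes "orthogonal_projector_onto S P" "v \<in> Sym S"
  shows "op_apply (site_projector P x) v = (\<lambda>_. 0)"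
proof -
  have "op_apply (op_tensor P {x}) v = v"
    by (rule op_apply_fixes_tensor_power[OF op_tensor_singleton_fixes_product_vector[OF assms(1)]])
       (use assms(2) in \<open>auto simp: Sym_def\<close>)
  then show ?thesis
    by (simp add: site_projector_def op_apply_diff fun_eq_iff)
qed

lemma projector_half_id_minus_op_perm:
  assumes inv: "\<tau> \<circ> \<tau> = id"
  shows "projector (op_scale (1/2) (op_id - op_perm \<tau>) :: ('a::finite, 'b::finite) hop)"
proof -
  let ?P = "op_scale (1/2) (op_id - op_perm \<tau>) :: ('a, 'b) hop"
  have sw: "c' = c \<circ> \<tau> \<longleftrightarrow> c = c' \<circ> \<tau>" for c c' :: "'a \<Rightarrow> 'b"
    using inv by (metis comp_assoc comp_id)
  have "op_mult ?P ?P c c' = (1/2) * (?P c c' - ?P (c \<circ> \<tau>) c')" for c c'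
    by (simp add: op_mult_apply op_apply_op_scale op_apply_diff op_apply_op_perm perm_vec_def)
  then have "op_mult ?P ?P c c' = ?P c c'" for c c'
    using sw[of c' c] inv by (auto simp: op_scale_def op_id_def op_perm_def comp_assoc)
  moreover have "?P c c' = cnj (?P c' c)" for c c'
    using sw[of c' c] by (auto simp: op_scale_def op_id_def op_perm_def)
  ultimately show ?thesis
    unfolding projector_def by blast
qed

lemma projector_edge_projector: "x \<noteq> y \<Longrightarrow> projector (edge_projector {x, y})"
  by (simp add: edge_projector_def edge_transposition_doubleton projector_half_id_minus_op_perm)

lemma edge_projector_annihilates_Sym:
  assumes "x \<noteq> y" "v \<in> Sym S"
  shows "op_apply (edge_projector {x, y}) v = (\<lambda>_. 0)"
proof -
  have "perm_vec (Transposition.transpose x y) v = v"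
    using assms(2) by (simp add: Sym_def)
  then show ?thesis
    using assms(1) by (simp add: edge_projector_def edge_transposition_doubleton fun_eq_iff
        op_apply_op_scale op_apply_diff op_apply_op_perm)
qed

lemma acts_within_edge_projector: "x \<noteq> y \<Longrightarrow> acts_within {x, y} (edge_projector {x, y})"
  by (simp add: edge_projector_def edge_transposition_doubleton acts_within_op_scale
      acts_within_diff acts_within_op_id acts_within_op_perm permutes_swap_id)

lemma edges_inE:
  assumes "irreflp E" "e \<in> edges_in E X"
  obtains x y where "x \<noteq> y" "e = {x, y}"
proof -
  obtain x y where "e = {x, y}" "E x y"
    using assms(2) unfolding edges_in_def by blast
  moreover from \<open>E x y\<close> have "x \<noteq> y"
    using assms(1) by (auto dest: irreflpD)
  ultimately show thesis
    using that by blast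
qed

lemma site_projector_properties:
  assumes "orthogonal_projector_onto S P"
  shows "projector (site_projector P x) \<and> acts_within {x} (site_projector P x)
    \<and> (\<forall>v\<in>Sym S. op_apply (site_projector P x) v = (\<lambda>_. 0))"
  using projector_site_projector[OF assms] acts_within_site_projector
    site_projector_annihilates_Sym[OF assms] by blast

lemma edge_projector_properties:
  assumes "irreflp E" "e \<in> edges_in E X"
  shows "projector (edge_projector e) \<and> acts_within e (edge_projector e)
    \<and> (\<forall>v\<in>Sym S. op_apply (edge_projector e) v = (\<lambda>_. 0))"
proof -
  obtain x y where xy: "x \<noteq> y" and "e = {x, y}"
    using edges_inE[OF assms] .
  then show ?thesis
    using projector_edge_projector[OF xy] acts_within_edge_projector[OF xy]
      edge_projector_annihilates_Sym[OF xy] by blast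
qed

lemma annihilator_in_local_left_ideal:
  assumes irr: "irreflp E" and S: "is_subspace S" and conn: "connected_in E X"
    and Op: "acts_within X Op" and kill: "\<forall>v\<in>Sym S. op_apply Op v = (\<lambda>_. 0)"
    and P: "orthogonal_projector_onto S P"
  shows "Op \<in> local_left_ideal X (site_projector P) (edges_in E X) edge_projector"
proof -
  let ?I = "local_left_ideal X (site_projector P) (edges_in E X) edge_projector"
  let ?Perms = "{\<sigma>. \<sigma> permutes X}"
  have X: "X \<noteq> {}"
    using conn by (simp add: connected_in_def)
  have "op_id - op_mult (op_perm \<sigma>) (op_tensor P X) \<in> ?I" if "\<sigma> permutes X" for \<sigma>
    by (rule id_minus_op_mult_in_local_left_ideal[OF acts_within_op_perm[OF that]
          id_minus_op_perm_in_local_left_ideal[OF irr conn that] id_minus_op_tensor_in_local_left_ideal])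
       simp
  then have sum_in: "(\<Sum>\<sigma>\<in>?Perms. op_mult Op (op_id - op_mult (op_perm \<sigma>) (op_tensor P X))) \<in> ?I"
    by (auto intro: sum_in_local_left_ideal op_mult_in_local_left_ideal[OF Op])
  have "op_mult Op (op_mult (\<Sum>\<sigma>\<in>?Perms. op_perm \<sigma>) (op_tensor P X)) = 0"
    using annihilates_symmetrized_op_tensor[OF S Op X kill] P
    unfolding orthogonal_projector_onto_def by blast
  then have "(\<Sum>\<sigma>\<in>?Perms. op_mult Op (op_id - op_mult (op_perm \<sigma>) (op_tensor P X))) = (\<Sum>\<sigma>\<in>?Perms. Op)"
    by (simp add: op_mult_diff_right sum_subtractf op_mult_sum_left op_mult_sum_right flip: op_mult_assoc)
  also have "\<dots> = op_scale (of_nat (card ?Perms)) Op"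
    by (simp add: op_scale_def sum_fun_apply fun_eq_iff)
  finally have "op_scale (of_nat (card ?Perms)) Op \<in> ?I"
    using sum_in by simp
  then have "op_scale (1 / of_nat (card ?Perms)) (op_scale (of_nat (card ?Perms)) Op) \<in> ?I"
    by (rule op_scale_in_local_left_ideal)
  moreover have "card ?Perms \<noteq> 0"
    by (simp add: card_permutations)
  ultimately show ?thesis
    by (simp add: op_scale_def)
qed

theorem lemma7p1:
  fixes E :: "'a::finite \<Rightarrow> 'a \<Rightarrow> bool"
    and S :: "('b::finite \<Rightarrow> complex) set"
    and X :: "'a set"
    and Op :: "('a, 'b) hop"
  assumes "symp E" and "irreflp E"
    and "is_subspace S"
    and "connected_in E X"
    and "acts_within X Op"
    and "\<forall>v\<in>Sym S. op_apply Op v = (\<lambda>_. 0)"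
  shows "\<exists>(oc1 :: 'a \<Rightarrow> ('a, 'b) hop) (P1 :: 'a \<Rightarrow> ('a, 'b) hop)
            (oc2 :: 'a set \<Rightarrow> ('a, 'b) hop) (P2 :: 'a set \<Rightarrow> ('a, 'b) hop).
     (\<forall>x\<in>X. acts_within X (oc1 x) \<and> projector (P1 x) \<and> acts_within {x} (P1 x)
              \<and> (\<forall>v\<in>Sym S. op_apply (P1 x) v = (\<lambda>_. 0)))
   \<and> (\<forall>e\<in>edges_in E X. acts_within X (oc2 e) \<and> projector (P2 e) \<and> acts_within e (P2 e)
              \<and> (\<forall>v\<in>Sym S. op_apply (P2 e) v = (\<lambda>_. 0)))
   \<and> Op = (\<lambda>c c'. (\<Sum>x\<in>X. op_mult (oc1 x) (P1 x) c c') + (\<Sum>e\<in>edges_in E X. op_mult (oc2 e) (P2 e) c c'))"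
proof -
  obtain P where P: "orthogonal_projector_onto S P"
    using orthogonal_projector_onto_exists[OF assms(3)] .
  have "Op \<in> local_left_ideal X (site_projector P) (edges_in E X) edge_projector"
    using annihilator_in_local_left_ideal[OF assms(2-6) P] .
  then obtain oc1 oc2 where oc1: "\<forall>x\<in>X. acts_within X (oc1 x)"
    and oc2: "\<forall>e\<in>edges_in E X. acts_within X (oc2 e)"
    and "Op = (\<Sum>x\<in>X. op_mult (oc1 x) (site_projector P x))
              + (\<Sum>e\<in>edges_in E X. op_mult (oc2 e) (edge_projector e))"
    unfolding local_left_ideal_def by blast
  then have "Op = (\<lambda>c c'. (\<Sum>x\<in>X. op_mult (oc1 x) (site_projector P x) c c')
      + (\<Sum>e\<in>edges_in E X. op_mult (oc2 e) (edge_projector e) c c'))"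
    by (simp add: fun_eq_iff sum_fun_apply)
  with oc1 oc2 show ?thesis
    using site_projector_properties[OF P] edge_projector_properties[OF assms(2)]
    by (intro exI[of _ oc1] exI[of _ "site_projector P"] exI[of _ oc2] exI[of _ edge_projector]) blast
qed

end
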